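(* Let $(S,\mu)$ be a complete positive measure space, let $X$ be a Banach space whose norm is Fréchet differentiable, and let $1<p<\infty$, $p\neq 2$. If $f\in L^p(\mu,X)$ is a non-zero left symmetric point or a non-zero right symmetric point of $L^p(\mu,X)$, then $Z(f)^c=\{s\in S:f(s)\neq0\}$ is either an atom or a disjoint union of exactly two atoms.
   Context: $L^p(\mu,X)$ is the Lebesgue–Bochner space of (classes of a.e. equal) strongly measurable $f:S\to X$ with $\|f\|_p=(\int_S\|f(s)\|^p\,d\mu(s))^{1/p}<\infty$; $Z(f)=\{s:f(s)=0\}$. In a normed space $Y$ over $\mathbb{K}$, $x\perp_{BJ}y$ means $\|x+\lambda y\|\ge\|x\|$ for all $\lambda\in\mathbb{K}$; $x$ is a left symmetric point if $x\perp_{BJ}y$ implies $y\perp_{BJ}x$ for all $y\in Y$, and a right symmetric point if $y\perp_{BJ}x$ implies $x\perp_{BJ}y$ for all $y\in Y$. The norm of $X$ is Fréchet differentiable if for every non-zero $x$ there is $\varphi\in X^*$ with $\lim_{h\to0}\big|\|x+h\|-\|x\|-\varphi(h)\big|/\|h\|=0$. A measurable set $A$ is an atom if $\mu(A)>0$ and every measurable $B\subseteq A$ has $\mu(B)=0$ or $\mu(B)=\mu(A)$. *)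

theory Defs
  imports "HOL-Analysis.Analysis"
begin

text \<open>A complex Banach space is modelled as a real Banach space together with a
  complex structure J (multiplication by i).\<close>

definition scal :: "('a::real_normed_vector \<Rightarrow> 'a) \<Rightarrow> complex \<Rightarrow> 'a \<Rightarrow> 'a" where
  "scal J c x = Re c *\<^sub>R x + Im c *\<^sub>R J x"

definition complex_structure :: "('a::real_normed_vector \<Rightarrow> 'a) \<Rightarrow> bool" where
  "complex_structure J \<longleftrightarrow> linear J \<and> (\<forall>x. J (J x) = - x)
     \<and> (\<forall>c x. norm (scal J c x) = cmod c * norm x)"

definition scalar_field :: "complex set \<Rightarrow> ('a::real_normed_vector \<Rightarrow> 'a) \<Rightarrow> bool" where
  "scalar_field K J \<longleftrightarrow> K = range complex_of_real \<or> (K = UNIV \<and> complex_structure J)"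

definition frechet_diff_norm :: "'a::real_normed_vector itself \<Rightarrow> bool" where
  "frechet_diff_norm _ \<longleftrightarrow> (\<forall>x::'a. x \<noteq> 0 \<longrightarrow> norm differentiable (at x))"

definition strongly_measurable :: "'s measure \<Rightarrow> ('s \<Rightarrow> 'a::real_normed_vector) \<Rightarrow> bool" where
  "strongly_measurable M f \<longleftrightarrow>
     (\<exists>u. (\<forall>n. simple_function M (u n)) \<and> (AE s in M. (\<lambda>n. u n s) \<longlonglongrightarrow> f s))"

definition Lp_space :: "'s measure \<Rightarrow> real \<Rightarrow> ('s \<Rightarrow> 'a::real_normed_vector) set" where
  "Lp_space M p = {f. strongly_measurable M f \<and>
                      (\<integral>\<^sup>+ s. ennreal (norm (f s) powr p) \<partial>M) < \<infinity>}"

definition Lp_norm :: "'s measure \<Rightarrow> real \<Rightarrow> ('s \<Rightarrow> 'a::real_normed_vector) \<Rightarrow> real" where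
  "Lp_norm M p f = (enn2real (\<integral>\<^sup>+ s. ennreal (norm (f s) powr p) \<partial>M)) powr (1 / p)"

text \<open>Birkhoff-James orthogonality in L^p(mu,X) (on representatives; the norm only
  depends on the a.e.-class).\<close>
definition Lp_bj_orth :: "'s measure \<Rightarrow> real \<Rightarrow> complex set \<Rightarrow> ('a::real_normed_vector \<Rightarrow> 'a)
      \<Rightarrow> ('s \<Rightarrow> 'a) \<Rightarrow> ('s \<Rightarrow> 'a) \<Rightarrow> bool" where
  "Lp_bj_orth M p K J f g \<longleftrightarrow>
     (\<forall>c\<in>K. Lp_norm M p (\<lambda>s. f s + scal J c (g s)) \<ge> Lp_norm M p f)"

definition Lp_left_symmetric where
  "Lp_left_symmetric M p K J f \<longleftrightarrow>
     (\<forall>g\<in>Lp_space M p. Lp_bj_orth M p K J f g \<longrightarrow> Lp_bj_orth M p K J g f)"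

definition Lp_right_symmetric where
  "Lp_right_symmetric M p K J f \<longleftrightarrow>
     (\<forall>g\<in>Lp_space M p. Lp_bj_orth M p K J g f \<longrightarrow> Lp_bj_orth M p K J f g)"

definition atom :: "'s measure \<Rightarrow> 's set \<Rightarrow> bool" where
  "atom M A \<longleftrightarrow> A \<in> sets M \<and> emeasure M A > 0 \<and>
     (\<forall>B\<in>sets M. B \<subseteq> A \<longrightarrow> emeasure M B = 0 \<or> emeasure M B = emeasure M A)"

end

theory Submission
  imports Defs
begin

text \<open>
  Split the support of f by a measurable set P and let A and B be the integrals of |f|^p over P
  and over its complement. For functions (x1 on P, x2 off P) * f the L^p norm only sees A and B,
  so Birkhoff-James orthogonality between two such functions becomes a question about the
  convex function c |-> A |x1 + c y1|^p + B |x2 + c y2|^p, decided by its derivative at c = 0.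
  For g = (1 on P, -t off P) * f with t > 0 this gives: f is orthogonal to g iff A = t B, and
  g is orthogonal to f iff A = t^(p-1) B. If A /= B and p /= 2, choosing t to satisfy one
  equation violates the other, so f is neither left nor right symmetric. A support that is
  neither an atom nor a union of two atoms always has such an unbalanced split. Only real
  multiples of f are tested.
\<close>

lemma powr_eq_self_iff:
  fixes t q :: real
  assumes "0 < t"
  shows "t powr q = t \<longleftrightarrow> t = 1 \<or> q = 1"
  using powr_inj[OF assms, of q 1] assms by auto

lemma powr_le_powr_iff:
  fixes a x y :: real
  assumes "0 < a" "0 \<le> x" "0 \<le> y"
  shows "x powr a \<le> y powr a \<longleftrightarrow> x \<le> y"
  using assms powr_mono2[of a x y] powr_less_mono2[of a y x] by (auto simp: not_le[symmetric])

lemma powr_ge_tangent_at_1: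
  fixes y p :: real
  assumes "1 \<le> p" "0 \<le> y"
  shows "1 + p * (y - 1) \<le> y powr p"
proof (cases "y = 0")
  case True
  then show ?thesis using assms by simp
next
  case False
  then have "y > 0" using assms by simp
  then have "p * 1 powr (p - 1) * (y - 1) \<le> y powr p - 1 powr p"
    by (intro convex_on_imp_above_tangent[where A="{0<..}"])
       (use assms in \<open>auto intro!: powr_convex derivative_eq_intros simp: interior_open\<close>)
  then show ?thesis by simp
qed

lemma cmod_one_plus_powr_ge:
  fixes p :: real and z :: complex
  assumes "1 \<le> p"
  shows "1 + p * Re z \<le> cmod (1 + z) powr p"
proof (cases "0 \<le> 1 + Re z")
  case True
  have "1 + p * Re z \<le> (1 + Re z) powr p"
    using powr_ge_tangent_at_1[OF assms True] by simp
  also have "\<dots> \<le> cmod (1 + z) powr p"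
    using True assms complex_Re_le_cmod[of "1 + z"] by (intro powr_mono2) auto
  finally show ?thesis .
next
  case False
  moreover have "p * Re z \<le> 1 * Re z"
    using False assms by (intro mult_right_mono_neg) auto
  ultimately have "1 + p * Re z \<le> 0"
    by linarith
  then show ?thesis
    using powr_ge_zero[of "cmod (1 + z)" p] by linarith
qed

lemma cmod_add_mult_powr_ge:
  fixes p x y :: real and c :: complex
  assumes "1 \<le> p"
  shows "\<bar>x\<bar> powr p + p * (sgn x * \<bar>x\<bar> powr (p - 1) * y) * Re c
           \<le> cmod (of_real x + c * of_real y) powr p"
proof (cases "x = 0")
  case True
  then show ?thesis by simp
next
  case False
  define z where "z = c * of_real (y / x)"
  have "of_real x + c * of_real y = of_real x * (1 + z)"
    using False by (simp add: z_def field_simps)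
  then have "cmod (of_real x + c * of_real y) powr p = \<bar>x\<bar> powr p * cmod (1 + z) powr p"
    by (simp add: norm_mult powr_mult)
  moreover have "\<bar>x\<bar> powr p * (1 + p * Re z) \<le> \<bar>x\<bar> powr p * cmod (1 + z) powr p"
    using cmod_one_plus_powr_ge[OF assms] by (intro mult_left_mono) auto
  moreover have "\<bar>x\<bar> powr p * (1 + p * Re z)
      = \<bar>x\<bar> powr p + p * (sgn x * \<bar>x\<bar> powr (p - 1) * y) * Re c"
    using False by (simp add: z_def powr_diff field_simps sgn_if)
  ultimately show ?thesis by simp
qed

lemma DERIV_abs_powr:
  fixes g :: "real \<Rightarrow> real"
  assumes g: "(g has_real_derivative g') (at t)" and nz: "g t \<noteq> 0"
  shows "((\<lambda>s. \<bar>g s\<bar> powr p) has_real_derivative p * (sgn (g t) * \<bar>g t\<bar> powr (p - 1) * g')) (at t)"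
proof -
  have "isCont (\<lambda>s. sgn (g t) * g s) t"
    using DERIV_isCont[OF g] by (intro continuous_intros)
  then have "((\<lambda>s. sgn (g t) * g s) \<longlongrightarrow> sgn (g t) * g t) (nhds t)"
    using tendsto_at_iff_tendsto_nhds[of "\<lambda>s. sgn (g t) * g s" t] by (simp add: isCont_def)
  moreover have "0 < sgn (g t) * g t"
    using nz by (simp add: sgn_if)
  ultimately have "eventually (\<lambda>s. 0 < sgn (g t) * g s) (nhds t)"
    by (rule order_tendstoD(1))
  then have ev: "eventually (\<lambda>s. \<bar>g s\<bar> powr p = (sgn (g t) * g s) powr p) (nhds t)"
    by eventually_elim (auto simp: sgn_if split: if_splits)
  have "sgn (g t) * g t = \<bar>g t\<bar>"
    by (simp add: sgn_if)
  then have "((\<lambda>s. (sgn (g t) * g s) powr p) has_real_derivative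
      p * \<bar>g t\<bar> powr (p - 1) * (sgn (g t) * g')) (at t)"
    using nz by (auto intro!: derivative_eq_intros g)
  then have "((\<lambda>s. \<bar>g s\<bar> powr p) has_real_derivative
      p * \<bar>g t\<bar> powr (p - 1) * (sgn (g t) * g')) (at t)"
    using DERIV_cong_ev[OF refl ev refl] by blast
  then show ?thesis
    by (simp add: ac_simps)
qed

lemma weighted_powr_sum_tangent_le:
  fixes a b p x1 x2 y1 y2 :: real and c :: complex
  assumes "1 \<le> p" "0 \<le> a" "0 \<le> b"
    and "a * (sgn x1 * \<bar>x1\<bar> powr (p - 1) * y1) + b * (sgn x2 * \<bar>x2\<bar> powr (p - 1) * y2) = 0"
  shows "a * \<bar>x1\<bar> powr p + b * \<bar>x2\<bar> powr p
           \<le> a * cmod (of_real x1 + c * of_real y1) powr p + b * cmod (of_real x2 + c * of_real y2) powr p"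
proof -
  define d1 d2 where "d1 = sgn x1 * \<bar>x1\<bar> powr (p - 1) * y1" and "d2 = sgn x2 * \<bar>x2\<bar> powr (p - 1) * y2"
  have "a * (p * d1 * Re c) + b * (p * d2 * Re c) = p * Re c * (a * d1 + b * d2)"
    by (simp add: algebra_simps)
  then have "a * \<bar>x1\<bar> powr p + b * \<bar>x2\<bar> powr p
      = a * (\<bar>x1\<bar> powr p + p * d1 * Re c) + b * (\<bar>x2\<bar> powr p + p * d2 * Re c)"
    using assms(4) unfolding d1_def[symmetric] d2_def[symmetric] by (simp add: distrib_left)
  also have "\<dots> \<le> a * cmod (of_real x1 + c * of_real y1) powr p + b * cmod (of_real x2 + c * of_real y2) powr p"
    unfolding d1_def d2_def
    using assms(2,3) cmod_add_mult_powr_ge[OF assms(1)] by (intro add_mono mult_left_mono) auto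
  finally show ?thesis .
qed

lemma weighted_powr_sum_decreases:
  fixes a b p x1 x2 y1 y2 :: real
  assumes "p \<noteq> 0" "x1 \<noteq> 0" "x2 \<noteq> 0"
    and "a * (sgn x1 * \<bar>x1\<bar> powr (p - 1) * y1) + b * (sgn x2 * \<bar>x2\<bar> powr (p - 1) * y2) \<noteq> 0"
  shows "\<exists>c. a * \<bar>x1 + c * y1\<bar> powr p + b * \<bar>x2 + c * y2\<bar> powr p
             < a * \<bar>x1\<bar> powr p + b * \<bar>x2\<bar> powr p"
proof (rule ccontr)
  define F where "F c = a * \<bar>x1 + c * y1\<bar> powr p + b * \<bar>x2 + c * y2\<bar> powr p" for c
  have term_deriv: "((\<lambda>c. \<bar>x + c * y\<bar> powr p) has_real_derivative
      p * (sgn x * \<bar>x\<bar> powr (p - 1) * y)) (at 0)" if "x \<noteq> 0" for x y :: real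
  proof -
    have "((\<lambda>c. x + c * y) has_real_derivative y) (at 0)"
      by (auto intro!: derivative_eq_intros)
    from DERIV_abs_powr[OF this] that show ?thesis
      by simp
  qed
  have "(F has_real_derivative a * (p * (sgn x1 * \<bar>x1\<bar> powr (p - 1) * y1))
      + b * (p * (sgn x2 * \<bar>x2\<bar> powr (p - 1) * y2))) (at 0)"
    unfolding F_def using assms(2,3) by (intro DERIV_add DERIV_cmult term_deriv)
  moreover assume "\<not> ?thesis"
  then have "\<forall>c. \<bar>0 - c\<bar> < 1 \<longrightarrow> F 0 \<le> F c"
    by (auto simp: F_def not_less)
  ultimately have "a * (p * (sgn x1 * \<bar>x1\<bar> powr (p - 1) * y1))
      + b * (p * (sgn x2 * \<bar>x2\<bar> powr (p - 1) * y2)) = 0"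
    by (intro DERIV_local_min[of F _ 0 1]) auto
  then have "p * (a * (sgn x1 * \<bar>x1\<bar> powr (p - 1) * y1) + b * (sgn x2 * \<bar>x2\<bar> powr (p - 1) * y2)) = 0"
    by (simp only: distrib_left mult.left_commute)
  then show False
    using assms(1,4) by simp
qed

lemma weighted_powr_sum_min_iff:
  fixes a b p x1 x2 y1 y2 :: real and K :: "complex set"
  assumes "1 \<le> p" "0 \<le> a" "0 \<le> b" "x1 \<noteq> 0" "x2 \<noteq> 0" "range complex_of_real \<subseteq> K"
  shows "(\<forall>c\<in>K. a * \<bar>x1\<bar> powr p + b * \<bar>x2\<bar> powr p
            \<le> a * cmod (of_real x1 + c * of_real y1) powr p + b * cmod (of_real x2 + c * of_real y2) powr p)
     \<longleftrightarrow> a * (sgn x1 * \<bar>x1\<bar> powr (p - 1) * y1) + b * (sgn x2 * \<bar>x2\<bar> powr (p - 1) * y2) = 0"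
    (is "(\<forall>c\<in>K. ?min \<le> ?val c) \<longleftrightarrow> ?slope = 0")
proof
  assume min: "\<forall>c\<in>K. ?min \<le> ?val c"
  have "\<not> a * \<bar>x1 + c * y1\<bar> powr p + b * \<bar>x2 + c * y2\<bar> powr p < ?min" for c :: real
  proof -
    have of_real_eq: "of_real x + of_real c * of_real y = complex_of_real (x + c * y)" for x y
      by simp
    have "?min \<le> ?val (of_real c)"
      using min assms(6) by blast
    then show ?thesis
      by (simp only: of_real_eq norm_of_real not_less)
  qed
  then show "?slope = 0"
    using weighted_powr_sum_decreases[of p x1 x2 a y1 b y2] assms(1,4,5) by auto
next
  assume "?slope = 0"
  then show "\<forall>c\<in>K. ?min \<le> ?val c"
    using weighted_powr_sum_tangent_le[OF assms(1-3)] by blast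
qed

lemma range_of_real_subset_scalar_field: "scalar_field K J \<Longrightarrow> range complex_of_real \<subseteq> K"
  unfolding scalar_field_def by auto

lemma norm_scaleR_add_scal_scaleR:
  assumes "scalar_field K J" "c \<in> K"
  shows "norm (a *\<^sub>R x + scal J c (b *\<^sub>R x)) = cmod (of_real a + c * of_real b) * norm x"
  using assms(1) unfolding scalar_field_def
proof
  assume "K = range complex_of_real"
  then obtain r where c: "c = of_real r"
    using assms(2) by auto
  then have "a *\<^sub>R x + scal J c (b *\<^sub>R x) = (a + r * b) *\<^sub>R x"
    by (simp add: scal_def algebra_simps)
  moreover have "of_real a + c * of_real b = complex_of_real (a + r * b)"
    by (simp add: c)
  ultimately show ?thesis
    by (simp only: norm_scaleR norm_of_real)
next
  assume "K = UNIV \<and> complex_structure J"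
  then have "linear J" and norm_scal: "\<And>d y. norm (scal J d y) = cmod d * norm y"
    unfolding complex_structure_def by auto
  then have "a *\<^sub>R x + scal J c (b *\<^sub>R x) = scal J (of_real a + c * of_real b) x"
    by (simp add: scal_def linear.scaleR algebra_simps)
  then show ?thesis
    using norm_scal by simp
qed

lemma strongly_measurable_imp_borel_measurable:
  fixes f :: "'s \<Rightarrow> 'a::real_normed_vector"
  assumes "complete_measure M" "strongly_measurable M f"
  shows "f \<in> borel_measurable M"
proof -
  obtain u where u: "\<And>n. simple_function M (u n)" and "AE s in M. (\<lambda>n. u n s) \<longlonglongrightarrow> f s"
    using assms(2) unfolding strongly_measurable_def by blast
  then obtain N where N: "{s \<in> space M. \<not> (\<lambda>n. u n s) \<longlonglongrightarrow> f s} \<subseteq> N" "N \<in> null_sets M"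
    by (auto elim: AE_E simp: null_sets_def)
  define g where "g s = (if s \<in> N then 0 else f s)" for s
  have "g \<in> borel_measurable M"
  proof (rule borel_measurable_LIMSEQ_metric)
    show "(\<lambda>s. if s \<in> N then 0 else u i s) \<in> borel_measurable M" for i
      using N(2) u by (intro measurable_If_set) (auto intro: borel_measurable_simple_function)
    show "(\<lambda>i. if s \<in> N then 0 else u i s) \<longlonglongrightarrow> g s" if "s \<in> space M" for s
      using N(1) that by (auto simp: g_def)
  qed
  have "AE s in M. g s = f s"
    using AE_not_in[OF N(2)] by eventually_elim (simp add: g_def)
  show ?thesis
  proof (rule borel_measurableI)
    fix T :: "'a set"
    assume "open T"
    then have "g -` T \<inter> space M \<in> sets M"
      using \<open>g \<in> borel_measurable M\<close> by (auto intro: measurable_sets borel_open)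
    moreover have "AE s in M. s \<in> g -` T \<inter> space M \<longleftrightarrow> s \<in> f -` T \<inter> space M"
      using \<open>AE s in M. g s = f s\<close> by eventually_elim auto
    ultimately show "f -` T \<inter> space M \<in> sets M"
      using complete_measure.in_sets_AE[OF assms(1)] by blast
  qed
qed

lemma strongly_measurable_scaleR:
  fixes f :: "'s \<Rightarrow> 'a::real_normed_vector"
  assumes "simple_function M h" "strongly_measurable M f"
  shows "strongly_measurable M (\<lambda>s. h s *\<^sub>R f s)"
proof -
  obtain u where "\<And>n. simple_function M (u n)" and "AE s in M. (\<lambda>n. u n s) \<longlonglongrightarrow> f s"
    using assms(2) unfolding strongly_measurable_def by blast
  then have "simple_function M (\<lambda>s. h s *\<^sub>R u n s)" for n
    using simple_function_compose2[OF assms(1), of "u n" "(*\<^sub>R)"] by simp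
  moreover have "AE s in M. (\<lambda>n. h s *\<^sub>R u n s) \<longlonglongrightarrow> h s *\<^sub>R f s"
    using \<open>AE s in M. (\<lambda>n. u n s) \<longlonglongrightarrow> f s\<close> by eventually_elim (intro tendsto_intros)
  ultimately show ?thesis
    unfolding strongly_measurable_def by (intro exI[where x="\<lambda>n s. h s *\<^sub>R u n s"] conjI) auto
qed

definition piecewise_scaleR :: "'s set \<Rightarrow> real \<Rightarrow> real \<Rightarrow> ('s \<Rightarrow> 'a::real_normed_vector) \<Rightarrow> 's \<Rightarrow> 'a"
  where "piecewise_scaleR P u v f s = (if s \<in> P then u else v) *\<^sub>R f s"

lemma piecewise_scaleR_1_1 [simp]: "piecewise_scaleR P 1 1 f = f"
  by (simp add: fun_eq_iff piecewise_scaleR_def)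

definition Lp_density :: "'s measure \<Rightarrow> real \<Rightarrow> ('s \<Rightarrow> 'a::real_normed_vector) \<Rightarrow> 's measure"
  where "Lp_density M p f = density M (\<lambda>s. ennreal (norm (f s) powr p))"

lemma sets_Lp_density [simp]: "sets (Lp_density M p f) = sets M"
  and space_Lp_density [simp]: "space (Lp_density M p f) = space M"
  by (simp_all add: Lp_density_def)

lemma finite_measure_Lp_density:
  assumes "f \<in> borel_measurable M" "f \<in> Lp_space M p"
  shows "finite_measure (Lp_density M p f)"
proof
  have "emeasure (Lp_density M p f) (space M)
      = (\<integral>\<^sup>+ s. ennreal (norm (f s) powr p) * indicator (space M) s \<partial>M)"
    unfolding Lp_density_def using assms(1) by (intro emeasure_density) auto
  also have "\<dots> = (\<integral>\<^sup>+ s. ennreal (norm (f s) powr p) \<partial>M)"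
    by (intro nn_integral_cong) simp
  finally show "emeasure (Lp_density M p f) (space (Lp_density M p f)) \<noteq> \<infinity>"
    using assms(2) by (simp add: Lp_space_def less_top)
qed

lemma measure_Lp_density_pos:
  assumes "f \<in> borel_measurable M" "f \<in> Lp_space M p" "X \<in> sets M"
    and "\<And>s. s \<in> X \<Longrightarrow> f s \<noteq> 0" "0 < emeasure M X"
  shows "0 < measure (Lp_density M p f) X"
proof -
  interpret finite_measure "Lp_density M p f"
    using assms(1,2) by (rule finite_measure_Lp_density)
  have "X \<notin> null_sets (Lp_density M p f)"
  proof
    assume "X \<in> null_sets (Lp_density M p f)"
    then have "AE s in M. s \<in> X \<longrightarrow> norm (f s) powr p = 0"
      unfolding Lp_density_def using assms(1) by (subst (asm) null_sets_density_iff) auto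
    then have "AE s in M. s \<notin> X"
      by eventually_elim (use assms(4) in auto)
    then have "emeasure M X = 0"
      using AE_iff_measurable[of X M "\<lambda>s. s \<notin> X"] assms(3) sets.sets_into_space by blast
    then show False
      using assms(5) by simp
  qed
  then show ?thesis
    using assms(3) emeasure_eq_measure[of X] measure_nonneg[of _ X] by (auto simp: null_sets_def less_le)
qed

lemma measure_Lp_density_zero:
  assumes "f \<in> borel_measurable M" "X \<in> sets M" "\<And>s. s \<in> X \<Longrightarrow> f s = 0"
  shows "measure (Lp_density M p f) X = 0"
proof -
  have "X \<in> null_sets (Lp_density M p f)"
    unfolding Lp_density_def using assms by (subst null_sets_density_iff) auto
  then show ?thesis
    by (simp add: measure_def null_sets_def)
qed

lemma nn_integral_piecewise_norm_powr:
  assumes "f \<in> borel_measurable M" "f \<in> Lp_space M p" "P \<in> sets M" "0 \<le> \<alpha>" "0 \<le> \<beta>"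
  shows "(\<integral>\<^sup>+ s. ennreal ((if s \<in> P then \<alpha> else \<beta>) * norm (f s) powr p) \<partial>M)
       = ennreal (measure (Lp_density M p f) P * \<alpha> + measure (Lp_density M p f) (space M - P) * \<beta>)"
proof -
  interpret finite_measure "Lp_density M p f"
    using assms(1,2) by (rule finite_measure_Lp_density)
  have "(\<integral>\<^sup>+ s. ennreal ((if s \<in> P then \<alpha> else \<beta>) * norm (f s) powr p) \<partial>M)
      = (\<integral>\<^sup>+ s. ennreal (norm (f s) powr p)
            * (ennreal \<alpha> * indicator P s + ennreal \<beta> * indicator (space M - P) s) \<partial>M)"
    using assms(4,5) by (intro nn_integral_cong) (simp add: indicator_def ennreal_mult mult.commute)
  also have "\<dots> = (\<integral>\<^sup>+ s. ennreal \<alpha> * indicator P s + ennreal \<beta> * indicator (space M - P) s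
                      \<partial>Lp_density M p f)"
    unfolding Lp_density_def using assms(1,3) by (intro nn_integral_density[symmetric]) auto
  also have "\<dots> = ennreal \<alpha> * emeasure (Lp_density M p f) P
                  + ennreal \<beta> * emeasure (Lp_density M p f) (space M - P)"
    using assms(3) by (subst nn_integral_add) (auto simp: nn_integral_cmult_indicator Lp_density_def)
  also have "\<dots> = ennreal (measure (Lp_density M p f) P * \<alpha> + measure (Lp_density M p f) (space M - P) * \<beta>)"
    using assms(4,5) by (simp add: emeasure_eq_measure ennreal_mult ennreal_plus mult.commute)
  finally show ?thesis .
qed

lemma norm_powr_piecewise_scaleR_add_scal:
  assumes "scalar_field K J" "c \<in> K"
  shows "norm (piecewise_scaleR P x1 x2 f s + scal J c (piecewise_scaleR P y1 y2 f s)) powr p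
       = (if s \<in> P then cmod (of_real x1 + c * of_real y1) powr p
          else cmod (of_real x2 + c * of_real y2) powr p) * norm (f s) powr p"
  using norm_scaleR_add_scal_scaleR[OF assms] by (simp add: piecewise_scaleR_def powr_mult)

lemma Lp_norm_piecewise_scaleR_add_scal:
  assumes "scalar_field K J" "c \<in> K" "f \<in> borel_measurable M" "f \<in> Lp_space M p" "P \<in> sets M"
  shows "Lp_norm M p (\<lambda>s. piecewise_scaleR P x1 x2 f s + scal J c (piecewise_scaleR P y1 y2 f s))
       = (measure (Lp_density M p f) P * cmod (of_real x1 + c * of_real y1) powr p
          + measure (Lp_density M p f) (space M - P) * cmod (of_real x2 + c * of_real y2) powr p)
         powr (1 / p)"
proof -
  have "(\<integral>\<^sup>+ s. ennreal (norm (piecewise_scaleR P x1 x2 f s + scal J c (piecewise_scaleR P y1 y2 f s)) powr p) \<partial>M)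
      = ennreal (measure (Lp_density M p f) P * cmod (of_real x1 + c * of_real y1) powr p
          + measure (Lp_density M p f) (space M - P) * cmod (of_real x2 + c * of_real y2) powr p)"
    (is "_ = ennreal ?r")
    unfolding norm_powr_piecewise_scaleR_add_scal[OF assms(1,2)]
    using assms(3-5) by (intro nn_integral_piecewise_norm_powr) auto
  moreover have "0 \<le> ?r"
    by simp
  ultimately show ?thesis
    unfolding Lp_norm_def by (simp del: ennreal_plus)
qed

lemma piecewise_scaleR_in_Lp_space:
  assumes "f \<in> borel_measurable M" "f \<in> Lp_space M p" "P \<in> sets M"
  shows "piecewise_scaleR P u v f \<in> Lp_space M p"
proof -
  have "simple_function M (\<lambda>s. if s \<in> P then u else v)"
    using assms(3) by (intro simple_function_If_set) auto
  then have "strongly_measurable M (piecewise_scaleR P u v f)"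
    using assms(2) strongly_measurable_scaleR unfolding Lp_space_def piecewise_scaleR_def by blast
  moreover have "(\<integral>\<^sup>+ s. ennreal (norm (piecewise_scaleR P u v f s) powr p) \<partial>M)
      = ennreal (measure (Lp_density M p f) P * \<bar>u\<bar> powr p
          + measure (Lp_density M p f) (space M - P) * \<bar>v\<bar> powr p)"
    using assms by (subst nn_integral_piecewise_norm_powr[symmetric])
      (auto intro!: nn_integral_cong simp: piecewise_scaleR_def powr_mult)
  ultimately show ?thesis
    unfolding Lp_space_def by simp
qed

lemma Lp_bj_orth_piecewise_scaleR_iff:
  assumes K: "scalar_field K J" and p: "1 \<le> p"
    and f: "f \<in> borel_measurable M" "f \<in> Lp_space M p" and P: "P \<in> sets M"
    and x: "x1 \<noteq> 0" "x2 \<noteq> 0"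
  shows "Lp_bj_orth M p K J (piecewise_scaleR P x1 x2 f) (piecewise_scaleR P y1 y2 f)
     \<longleftrightarrow> measure (Lp_density M p f) P * (sgn x1 * \<bar>x1\<bar> powr (p - 1) * y1)
         + measure (Lp_density M p f) (space M - P) * (sgn x2 * \<bar>x2\<bar> powr (p - 1) * y2) = 0"
    (is "_ \<longleftrightarrow> ?A * _ + ?B * _ = 0")
proof -
  have norm_g: "Lp_norm M p (piecewise_scaleR P x1 x2 f)
      = (?A * \<bar>x1\<bar> powr p + ?B * \<bar>x2\<bar> powr p) powr (1 / p)"
  proof -
    have "0 \<in> K"
      using range_of_real_subset_scalar_field[OF K] by force
    from Lp_norm_piecewise_scaleR_add_scal[OF K this f P] show ?thesis
      by (simp add: scal_def)
  qed
  have "Lp_bj_orth M p K J (piecewise_scaleR P x1 x2 f) (piecewise_scaleR P y1 y2 f)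
     \<longleftrightarrow> (\<forall>c\<in>K. ?A * \<bar>x1\<bar> powr p + ?B * \<bar>x2\<bar> powr p
            \<le> ?A * cmod (of_real x1 + c * of_real y1) powr p + ?B * cmod (of_real x2 + c * of_real y2) powr p)"
    unfolding Lp_bj_orth_def norm_g
  proof (intro ball_cong refl)
    fix c
    assume "c \<in> K"
    show "(?A * \<bar>x1\<bar> powr p + ?B * \<bar>x2\<bar> powr p) powr (1 / p)
          \<le> Lp_norm M p (\<lambda>s. piecewise_scaleR P x1 x2 f s + scal J c (piecewise_scaleR P y1 y2 f s))
       \<longleftrightarrow> ?A * \<bar>x1\<bar> powr p + ?B * \<bar>x2\<bar> powr p
          \<le> ?A * cmod (of_real x1 + c * of_real y1) powr p + ?B * cmod (of_real x2 + c * of_real y2) powr p"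
      unfolding Lp_norm_piecewise_scaleR_add_scal[OF K \<open>c \<in> K\<close> f P]
      using p by (intro powr_le_powr_iff) auto
  qed
  also have "\<dots> \<longleftrightarrow> ?A * (sgn x1 * \<bar>x1\<bar> powr (p - 1) * y1) + ?B * (sgn x2 * \<bar>x2\<bar> powr (p - 1) * y2) = 0"
    using p x range_of_real_subset_scalar_field[OF K] by (intro weighted_powr_sum_min_iff) auto
  finally show ?thesis .
qed

lemma not_Lp_left_symmetric_if_unbalanced:
  assumes K: "scalar_field K J" and p: "1 < p" "p \<noteq> 2"
    and f: "f \<in> borel_measurable M" "f \<in> Lp_space M p" and P: "P \<in> sets M"
    and A: "0 < measure (Lp_density M p f) P" and B: "0 < measure (Lp_density M p f) (space M - P)"
    and AB: "measure (Lp_density M p f) P \<noteq> measure (Lp_density M p f) (space M - P)"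
  shows "\<not> Lp_left_symmetric M p K J f"
proof
  define t where "t = measure (Lp_density M p f) P / measure (Lp_density M p f) (space M - P)"
  have t: "0 < t" "t \<noteq> 1"
    using A B AB by (auto simp: t_def)
  let ?g = "piecewise_scaleR P 1 (- t) f"
  have "Lp_bj_orth M p K J (piecewise_scaleR P 1 1 f) ?g"
    using B by (subst Lp_bj_orth_piecewise_scaleR_iff[OF K _ f P]) (use p in \<open>auto simp: t_def\<close>)
  moreover have "\<not> Lp_bj_orth M p K J ?g (piecewise_scaleR P 1 1 f)"
  proof
    assume "Lp_bj_orth M p K J ?g (piecewise_scaleR P 1 1 f)"
    then have "t powr (p - 1) = t"
      using B t(1) by (subst (asm) Lp_bj_orth_piecewise_scaleR_iff[OF K _ f P]) (use p in \<open>auto simp: t_def field_simps\<close>)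
    then show False
      using powr_eq_self_iff[OF t(1)] t(2) p by auto
  qed
  moreover assume "Lp_left_symmetric M p K J f"
  ultimately show False
    using piecewise_scaleR_in_Lp_space[OF f P] unfolding Lp_left_symmetric_def by auto
qed

lemma not_Lp_right_symmetric_if_unbalanced:
  assumes K: "scalar_field K J" and p: "1 < p" "p \<noteq> 2"
    and f: "f \<in> borel_measurable M" "f \<in> Lp_space M p" and P: "P \<in> sets M"
    and A: "0 < measure (Lp_density M p f) P" and B: "0 < measure (Lp_density M p f) (space M - P)"
    and AB: "measure (Lp_density M p f) P \<noteq> measure (Lp_density M p f) (space M - P)"
  shows "\<not> Lp_right_symmetric M p K J f"
proof
  define t where
    "t = (measure (Lp_density M p f) P / measure (Lp_density M p f) (space M - P)) powr (1 / (p - 1))"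
  have t: "0 < t" "t powr (p - 1) = measure (Lp_density M p f) P / measure (Lp_density M p f) (space M - P)"
    using A B p by (auto simp: t_def powr_powr)
  let ?g = "piecewise_scaleR P 1 (- t) f"
  have "Lp_bj_orth M p K J ?g (piecewise_scaleR P 1 1 f)"
    using B t by (subst Lp_bj_orth_piecewise_scaleR_iff[OF K _ f P]) (use p in \<open>auto simp: field_simps\<close>)
  moreover have "\<not> Lp_bj_orth M p K J (piecewise_scaleR P 1 1 f) ?g"
  proof
    assume "Lp_bj_orth M p K J (piecewise_scaleR P 1 1 f) ?g"
    then have "t powr (p - 1) = t"
      using B t by (subst (asm) Lp_bj_orth_piecewise_scaleR_iff[OF K _ f P]) (use p in \<open>auto simp: field_simps\<close>)
    then have "t = 1"
      using powr_eq_self_iff[OF t(1)] p by auto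
    then show False
      using t(2) B AB by simp
  qed
  moreover assume "Lp_right_symmetric M p K J f"
  ultimately show False
    using piecewise_scaleR_in_Lp_space[OF f P] unfolding Lp_right_symmetric_def by auto
qed

lemma split_of_not_atom:
  assumes "E \<in> sets M" "0 < emeasure M E" "\<not> atom M E"
  obtains E1 where "E1 \<in> sets M" "E1 \<subseteq> E" "0 < emeasure M E1" "0 < emeasure M (E - E1)"
proof -
  obtain E1 where E1: "E1 \<in> sets M" "E1 \<subseteq> E" "emeasure M E1 \<noteq> 0" "emeasure M E1 \<noteq> emeasure M E"
    using assms unfolding atom_def by auto
  have "emeasure M E1 + emeasure M (E - E1) = emeasure M E"
    using E1 assms(1) by (subst plus_emeasure) (auto simp: Un_absorb1)
  then have "emeasure M (E - E1) \<noteq> 0"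
    using E1(4) by auto
  then show thesis
    using E1 that by (simp add: zero_less_iff_neq_zero)
qed

lemma split_of_not_atom_less:
  assumes N: "finite_measure N" "sets N = sets M"
    and X: "X \<in> sets M" "0 < emeasure M X" "\<not> atom M X"
    and pos: "\<And>Y. Y \<in> sets M \<Longrightarrow> Y \<subseteq> X \<Longrightarrow> 0 < emeasure M Y \<Longrightarrow> 0 < measure N Y"
  obtains X1 where "X1 \<in> sets M" "X1 \<subseteq> X" "0 < emeasure M X1" "0 < emeasure M (X - X1)"
    "0 < measure N X1" "measure N X1 < measure N X"
proof -
  obtain X1 where X1: "X1 \<in> sets M" "X1 \<subseteq> X" "0 < emeasure M X1" "0 < emeasure M (X - X1)"
    using split_of_not_atom[OF X] .
  moreover have "0 < measure N X1" "0 < measure N (X - X1)"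
    using X X1 by (auto intro!: pos)
  moreover have "measure N (X - X1) = measure N X - measure N X1"
    using finite_measure.finite_measure_Diff[OF N(1), of X X1] X(1) X1(1,2) N(2) by simp
  ultimately show thesis
    using that by simp
qed

lemma exists_unbalanced_split:
  assumes N: "finite_measure N" "sets N = sets M"
    and S: "S \<in> sets M" "0 < emeasure M S"
    and null: "measure N (space M - S) = 0"
    and pos: "\<And>X. X \<in> sets M \<Longrightarrow> X \<subseteq> S \<Longrightarrow> 0 < emeasure M X \<Longrightarrow> 0 < measure N X"
    and not_atom: "\<not> atom M S"
    and not_two_atoms: "\<nexists>A1 A2. atom M A1 \<and> atom M A2 \<and> A1 \<inter> A2 = {} \<and> S = A1 \<union> A2"
  obtains P where "P \<in> sets M" "0 < measure N P" "0 < measure N (space M - P)"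
    "measure N P \<noteq> measure N (space M - P)"
proof -
  interpret finite_measure N
    by (fact N(1))
  have diff: "measure N (X - Y) = measure N X - measure N Y" if "X \<in> sets M" "Y \<in> sets M" "Y \<subseteq> X" for X Y
    using finite_measure_Diff[of X Y] that N(2) by simp
  define T where "T = measure N (space M)"
  have compl: "measure N (space M - P) = T - measure N P" if "P \<in> sets M" for P
    using finite_measure_compl[of P] that N(2) sets_eq_imp_space_eq[OF N(2)] by (simp add: T_def)
  have "T = measure N S"
    using compl[OF S(1)] null by simp
  obtain B where B: "B \<in> sets M" "B \<subseteq> S" "0 < emeasure M B" "0 < emeasure M (S - B)"
    "0 < measure N B" "measure N B < measure N S"
    by (rule split_of_not_atom_less[OF N S not_atom pos])
  have "\<exists>P\<in>sets M. 0 < measure N P \<and> measure N P < T \<and> 2 * measure N P \<noteq> T"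
  proof (cases "2 * measure N B = T")
    case True
    have "B \<inter> (S - B) = {}" "S = B \<union> (S - B)"
      using B(2) by auto
    then have "\<not> atom M B \<or> \<not> atom M (S - B)"
      using not_two_atoms by blast
    then obtain X where X: "X = B \<or> X = S - B" "\<not> atom M X"
      by blast
    have "measure N (S - B) = measure N B"
      using diff[OF S(1) B(1,2)] True \<open>T = measure N S\<close> by simp
    then have "X \<in> sets M" "X \<subseteq> S" "0 < emeasure M X" "2 * measure N X = T"
      using X(1) B S(1) True by auto
    have pos_X: "0 < measure N Y" if "Y \<in> sets M" "Y \<subseteq> X" "0 < emeasure M Y" for Y
      using that \<open>X \<subseteq> S\<close> by (intro pos) auto
    obtain X1 where "X1 \<in> sets M" "X1 \<subseteq> X" "0 < emeasure M X1" "0 < emeasure M (X - X1)"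
      "0 < measure N X1" "measure N X1 < measure N X"
      by (rule split_of_not_atom_less[OF N \<open>X \<in> sets M\<close> \<open>0 < emeasure M X\<close> X(2) pos_X])
    then show ?thesis
      using \<open>2 * measure N X = T\<close> by (intro bexI[of _ X1]) auto
  next
    case False
    then show ?thesis
      using B \<open>T = measure N S\<close> by auto
  qed
  then obtain P where "P \<in> sets M" "0 < measure N P" "measure N P < T" "2 * measure N P \<noteq> T"
    by blast
  then show thesis
    by (intro that[of P]) (auto simp: compl)
qed

theorem theorem3p13:
  fixes M :: "'s measure" and p :: real and K :: "complex set"
    and J :: "'a::banach \<Rightarrow> 'a" and f :: "'s \<Rightarrow> 'a"
  assumes "complete_measure M"
    and "scalar_field K J"
    and "frechet_diff_norm TYPE('a)"
    and "1 < p" and "p \<noteq> 2"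
    and "f \<in> Lp_space M p"
    and "\<not> (AE s in M. f s = 0)"
    and "Lp_left_symmetric M p K J f \<or> Lp_right_symmetric M p K J f"
  shows "atom M {s \<in> space M. f s \<noteq> 0} \<or>
         (\<exists>A1 A2. atom M A1 \<and> atom M A2 \<and> A1 \<inter> A2 = {} \<and>
                  {s \<in> space M. f s \<noteq> 0} = A1 \<union> A2)"
proof (rule ccontr)
  define S where "S = {s \<in> space M. f s \<noteq> 0}"
  assume "\<not> ?thesis"
  then have not_atoms: "\<not> atom M S" "\<nexists>A1 A2. atom M A1 \<and> atom M A2 \<and> A1 \<inter> A2 = {} \<and> S = A1 \<union> A2"
    by (auto simp: S_def)
  have f: "f \<in> borel_measurable M" "f \<in> Lp_space M p"
    using strongly_measurable_imp_borel_measurable[OF assms(1)] assms(6) by (auto simp: Lp_space_def)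
  have S: "S \<in> sets M"
    unfolding S_def using f(1) by measurable
  have "0 < emeasure M S"
    using assms(7) AE_iff_measurable[OF S] by (auto simp: S_def zero_less_iff_neq_zero)
  moreover have "measure (Lp_density M p f) (space M - S) = 0"
    using S f(1) by (intro measure_Lp_density_zero) (auto simp: S_def)
  moreover have "0 < measure (Lp_density M p f) X"
    if "X \<in> sets M" "X \<subseteq> S" "0 < emeasure M X" for X
    using that f by (intro measure_Lp_density_pos) (auto simp: S_def)
  ultimately obtain P where "P \<in> sets M" "0 < measure (Lp_density M p f) P"
    "0 < measure (Lp_density M p f) (space M - P)"
    "measure (Lp_density M p f) P \<noteq> measure (Lp_density M p f) (space M - P)"
    using exists_unbalanced_split[OF finite_measure_Lp_density[OF f] sets_Lp_density S] not_atoms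
    by blast
  then show False
    using not_Lp_left_symmetric_if_unbalanced[OF assms(2,4,5) f] assms(8)
      not_Lp_right_symmetric_if_unbalanced[OF assms(2,4,5) f] by blast
qed

end
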